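(* Let $d\ge 2$, $2\le k\le d+1$, and let $y_1,\dots,y_N\in\{1,\dots,k\}$ be labels of a class-balanced dataset (each class has exactly $N/k\ge1$ samples). For $\boldsymbol w_1,\dots,\boldsymbol w_k,\boldsymbol z_1,\dots,\boldsymbol z_N\in\mathbb S^{d-1}$ define the sample margin regularization risk $$R=\frac1N\sum_{i=1}^N\Big(-\boldsymbol w_{y_i}^{\mathrm T}\boldsymbol z_i+\max_{j\ne y_i}\boldsymbol w_j^{\mathrm T}\boldsymbol z_i\Big).$$ Then $R\ge-\frac{k}{k-1}$, with equality if and only if $\boldsymbol w_i^{\mathrm T}\boldsymbol w_j=-\frac1{k-1}$ for all $i\ne j$ and $\boldsymbol z_i=\boldsymbol w_{y_i}$ for all $i$. Consequently minimizing $R$ yields the largest possible class margin $\arccos\frac{-1}{k-1}$ and the largest possible minimal sample margin $\frac{k}{k-1}$.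
   Context: $\mathbb S^{d-1}$ is the unit sphere in $\mathbb R^d$. Class margin: $m_c(\{\boldsymbol w_i\})=\arccos\big[\max_{i\ne j}\boldsymbol w_i^{\mathrm T}\boldsymbol w_j\big]$ for unit prototypes. Minimal sample margin: $\gamma_{\min}=\min_i\big(\boldsymbol w_{y_i}^{\mathrm T}\boldsymbol z_i-\max_{j\ne y_i}\boldsymbol w_j^{\mathrm T}\boldsymbol z_i\big)$. *)

theory Defs
  imports "HOL-Analysis.Analysis"
begin

text \<open>Classes are labelled 1..k, samples are indexed 0..N-1.
  Prototypes w :: nat => real^'d (used on {1..k}), features z (used on {..<N}),
  labels y (values in {1..k}).\<close>

definition max_other :: "nat \<Rightarrow> (nat \<Rightarrow> real^'d) \<Rightarrow> nat \<Rightarrow> real^'d \<Rightarrow> real" where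
  "max_other k w c v = Max {w j \<bullet> v | j. j \<in> {1..k} \<and> j \<noteq> c}"

definition sm_risk :: "nat \<Rightarrow> nat \<Rightarrow> (nat \<Rightarrow> real^'d) \<Rightarrow> (nat \<Rightarrow> real^'d) \<Rightarrow> (nat \<Rightarrow> nat) \<Rightarrow> real" where
  "sm_risk k N w z y =
     (1 / real N) * (\<Sum>i<N. - (w (y i) \<bullet> z i) + max_other k w (y i) (z i))"

definition class_margin :: "nat \<Rightarrow> (nat \<Rightarrow> real^'d) \<Rightarrow> real" where
  "class_margin k w = arccos (Max {w i \<bullet> w j | i j. i \<in> {1..k} \<and> j \<in> {1..k} \<and> i \<noteq> j})"

definition min_sample_margin :: "nat \<Rightarrow> nat \<Rightarrow> (nat \<Rightarrow> real^'d) \<Rightarrow> (nat \<Rightarrow> real^'d) \<Rightarrow> (nat \<Rightarrow> nat) \<Rightarrow> real" where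
  "min_sample_margin k N w z y =
     Min {w (y i) \<bullet> z i - max_other k w (y i) (z i) | i. i < N}"

end

theory Submission
  imports Defs
begin

(* Let S be the sum of the prototypes. The largest competing score of a sample of class c is at
   least the average over the other k - 1 classes, so its margin is at most (k w_c - S) . z / (k - 1).
   For unit z, 2k (k w_c - S) . z <= |k w_c - S|^2 + k^2; summed over a class-balanced dataset the
   terms linear in w_c add up to |S|^2, which yields R >= -k/(k-1) + |S|^2 / (2k(k-1)).
   Equality forces S = 0, z_i = w_(y_i) (equality in Cauchy-Schwarz) and "maximum = average",
   i.e. all w_i . w_j equal -1/(k-1). For the margins: |S|^2 >= 0 bounds the largest pairwise
   inner product from below, and the minimal sample margin is at most the mean margin -R. *)

lemma two_inner_unit_le:
  fixes a v :: "'a::real_inner"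
  assumes "norm v = 1"
  shows "2 * t * (a \<bullet> v) \<le> a \<bullet> a + t\<^sup>2"
proof -
  have "0 \<le> (a - t *\<^sub>R v) \<bullet> (a - t *\<^sub>R v)" by simp
  also have "\<dots> = a \<bullet> a + t\<^sup>2 - 2 * t * (a \<bullet> v)"
    using assms by (simp add: norm_eq_1 inner_diff_left inner_diff_right inner_commute
        power2_eq_square algebra_simps)
  finally show ?thesis by simp
qed

lemma unit_vector_eq_if_inner_eq_1:
  fixes a b :: "'a::real_inner"
  assumes "norm a = 1" "norm b = 1" "a \<bullet> b = 1"
  shows "a = b"
  using assms by (subst vector_eq) (simp add: norm_eq_1 inner_commute)

lemma sum_balanced_labels:
  fixes f :: "'b \<Rightarrow> 'a::comm_semiring_1" and N n :: nat
  assumes "finite C" and "\<And>i. i < N \<Longrightarrow> y i \<in> C"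
    and "\<And>c. c \<in> C \<Longrightarrow> card {i. i < N \<and> y i = c} = n"
  shows "(\<Sum>i<N. f (y i)) = of_nat n * (\<Sum>c\<in>C. f c)"
proof -
  have "(\<Sum>i<N. f (y i)) = (\<Sum>c\<in>C. \<Sum>i\<in>{i. i \<in> {..<N} \<and> y i = c}. f (y i))"
    by (rule sum.group[symmetric]) (use assms in auto)
  also have "\<dots> = (\<Sum>c\<in>C. of_nat n * f c)"
    using assms(3) by (intro sum.cong) auto
  finally show ?thesis by (simp add: sum_distrib_left)
qed

lemma pairwise_inner_lower_bound:
  fixes u :: "'b \<Rightarrow> 'a::real_inner"
  assumes "finite C" and "2 \<le> card C" and "\<And>c. c \<in> C \<Longrightarrow> norm (u c) = 1"
    and "\<And>i j. i \<in> C \<Longrightarrow> j \<in> C \<Longrightarrow> i \<noteq> j \<Longrightarrow> u i \<bullet> u j \<le> M"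
  shows "- 1 / (real (card C) - 1) \<le> M"
proof -
  let ?m = "real (card C)"
  have "0 \<le> (\<Sum>i\<in>C. u i) \<bullet> (\<Sum>j\<in>C. u j)" by simp
  also have "\<dots> = (\<Sum>i\<in>C. \<Sum>j\<in>C. u i \<bullet> u j)"
    unfolding inner_sum_left by (simp add: inner_sum_right)
  also have "\<dots> \<le> (\<Sum>i\<in>C. 1 + (?m - 1) * M)"
  proof (rule sum_mono)
    fix i assume i: "i \<in> C"
    have "(\<Sum>j\<in>C. u i \<bullet> u j) = u i \<bullet> u i + (\<Sum>j\<in>C - {i}. u i \<bullet> u j)"
      using assms(1) i by (simp add: sum.remove)
    also have "\<dots> \<le> 1 + real (card (C - {i})) * M"
      using i assms(3,4) by (intro add_mono sum_bounded_above) (auto simp: norm_eq_1)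
    finally show "(\<Sum>j\<in>C. u i \<bullet> u j) \<le> 1 + (?m - 1) * M"
      using i assms(1,2) by (simp add: of_nat_diff)
  qed
  also have "\<dots> = ?m * (1 + (?m - 1) * M)" by simp
  finally have "0 \<le> 1 + (?m - 1) * M"
    using assms(2) by (simp add: zero_le_mult_iff)
  moreover have "0 < ?m - 1"
    using assms(2) by simp
  ultimately show ?thesis
    by (simp add: field_simps)
qed

lemma max_other_eq_Max_image:
  "max_other k w c v = Max ((\<lambda>j. w j \<bullet> v) ` ({1..k} - {c}))"
  unfolding max_other_def by (rule arg_cong[where f = Max]) auto

lemma max_other_ge: "j \<in> {1..k} \<Longrightarrow> j \<noteq> c \<Longrightarrow> w j \<bullet> v \<le> max_other k w c v"
  unfolding max_other_eq_Max_image by (rule Max_ge) auto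

lemma max_other_eq_const:
  assumes "c \<in> {1..k}" and "2 \<le> k" and "\<And>j. j \<in> {1..k} \<Longrightarrow> j \<noteq> c \<Longrightarrow> w j \<bullet> v = x"
  shows "max_other k w c v = x"
proof -
  have "(if c = 1 then 2 else 1) \<in> {1..k} - {c}"
    using assms(1,2) by auto
  then have "(\<lambda>j. w j \<bullet> v) ` ({1..k} - {c}) = {x}"
    using assms(3) by auto
  then show ?thesis
    unfolding max_other_eq_Max_image by simp
qed

lemma sum_others_inner:
  fixes w :: "nat \<Rightarrow> real^'d"
  assumes "c \<in> {1..k}"
  shows "(\<Sum>j\<in>{1..k} - {c}. w j \<bullet> v) = (\<Sum>j\<in>{1..k}. w j) \<bullet> v - w c \<bullet> v"
  using assms by (simp add: sum_diff1 inner_sum_left)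

lemma sum_others_le_max_other:
  assumes "c \<in> {1..k}"
  shows "(\<Sum>j\<in>{1..k} - {c}. w j \<bullet> v) \<le> (real k - 1) * max_other k w c v"
proof -
  have "(\<Sum>j\<in>{1..k} - {c}. w j \<bullet> v) \<le> real (card ({1..k} - {c})) * max_other k w c v"
    by (rule sum_bounded_above) (auto intro: max_other_ge)
  then show ?thesis
    using assms by (simp add: of_nat_diff)
qed

lemma inner_eq_max_other_if_sum_others_eq:
  assumes "c \<in> {1..k}"
    and "(\<Sum>j\<in>{1..k} - {c}. w j \<bullet> v) = (real k - 1) * max_other k w c v"
    and "j \<in> {1..k}" and "j \<noteq> c"
  shows "w j \<bullet> v = max_other k w c v"
proof -
  have "(\<Sum>i\<in>{1..k} - {c}. w i \<bullet> v) = (\<Sum>i\<in>{1..k} - {c}. max_other k w c v)"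
    using assms(1,2) by (simp add: of_nat_diff)
  then show ?thesis
    by (rule sum_mono_inv) (use assms(3,4) in \<open>auto intro: max_other_ge\<close>)
qed

definition sample_margin :: "nat \<Rightarrow> (nat \<Rightarrow> real^'d) \<Rightarrow> nat \<Rightarrow> real^'d \<Rightarrow> real" where
  "sample_margin k w c v = w c \<bullet> v - max_other k w c v"

lemma sm_risk_eq_mean_sample_margin:
  "sm_risk k N w z y = - (\<Sum>i<N. sample_margin k w (y i) (z i)) / real N"
  unfolding sm_risk_def sample_margin_def by (simp add: sum_subtractf minus_divide_left)

lemma min_sample_margin_eq_Min_image:
  "min_sample_margin k N w z y = Min ((\<lambda>i. sample_margin k w (y i) (z i)) ` {..<N})"
  unfolding min_sample_margin_def sample_margin_def by (rule arg_cong[where f = Min]) auto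

lemma sample_margin_le_inner:
  assumes "c \<in> {1..k}"
  shows "(real k - 1) * sample_margin k w c v \<le> (real k *\<^sub>R w c - (\<Sum>j\<in>{1..k}. w j)) \<bullet> v"
  using sum_others_le_max_other[OF assms, of w v] sum_others_inner[OF assms, of w v]
  unfolding sample_margin_def by (simp add: inner_diff_left algebra_simps)

lemma sample_margin_quadratic_bound:
  assumes "c \<in> {1..k}" and "norm v = 1" and "norm (w c) = 1"
  defines "S \<equiv> \<Sum>j\<in>{1..k}. w j"
  shows "2 * real k * (real k - 1) * sample_margin k w c v
    \<le> 2 * (real k)\<^sup>2 - 2 * real k * (S \<bullet> w c) + S \<bullet> S"
proof -
  have "2 * real k * ((real k - 1) * sample_margin k w c v)
      \<le> 2 * real k * ((real k *\<^sub>R w c - S) \<bullet> v)"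
    using sample_margin_le_inner[OF assms(1)] unfolding S_def
    by (intro mult_left_mono) auto
  also have "\<dots> \<le> (real k *\<^sub>R w c - S) \<bullet> (real k *\<^sub>R w c - S) + (real k)\<^sup>2"
    by (rule two_inner_unit_le[OF assms(2)])
  also have "\<dots> = 2 * (real k)\<^sup>2 - 2 * real k * (S \<bullet> w c) + S \<bullet> S"
    using assms(3) by (simp add: norm_eq_1 inner_diff_left inner_diff_right inner_commute
        power2_eq_square algebra_simps)
  finally show ?thesis
    by (simp add: mult.assoc)
qed

lemma sample_margin_simplex:
  assumes "c \<in> {1..k}" and "2 \<le> k" and "norm (w c) = 1"
    and "\<And>j. j \<in> {1..k} \<Longrightarrow> j \<noteq> c \<Longrightarrow> w j \<bullet> w c = - 1 / (real k - 1)"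
  shows "sample_margin k w c (w c) = real k / (real k - 1)"
proof -
  have "max_other k w c (w c) = - 1 / (real k - 1)"
    using max_other_eq_const[OF assms(1,2)] assms(4) by blast
  moreover have "w c \<bullet> w c = 1"
    using assms(3) by (simp add: norm_eq_1)
  ultimately show ?thesis
    using assms(2) unfolding sample_margin_def by (simp add: field_simps)
qed

lemma class_margin_le_simplex:
  assumes "2 \<le> k" and "\<And>j. j \<in> {1..k} \<Longrightarrow> norm (w j) = 1"
  shows "class_margin k w \<le> arccos (- 1 / (real k - 1))"
proof -
  define P where "P = {w i \<bullet> w j | i j. i \<in> {1..k} \<and> j \<in> {1..k} \<and> i \<noteq> j}"
  have "P \<subseteq> (\<lambda>(i, j). w i \<bullet> w j) ` ({1..k} \<times> {1..k})"
    unfolding P_def by auto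
  then have "finite P"
    by (rule finite_subset) simp
  moreover have "w 1 \<bullet> w 2 \<in> P"
    using assms(1) unfolding P_def by force
  ultimately have "Max P \<in> P"
    by (intro Max_in) auto
  then obtain i j where "i \<in> {1..k}" "j \<in> {1..k}" "Max P = w i \<bullet> w j"
    unfolding P_def by blast
  then have "Max P \<le> 1"
    using assms(2) norm_cauchy_schwarz[of "w i" "w j"] by simp
  moreover have "- 1 / (real k - 1) \<le> Max P"
    using pairwise_inner_lower_bound[of "{1..k}" w "Max P"] assms \<open>finite P\<close>
    unfolding P_def by (auto intro: Max_ge)
  moreover have "- 1 \<le> - 1 / (real k - 1)"
    using assms(1) by (simp add: divide_le_eq)
  ultimately show ?thesis
    unfolding class_margin_def P_def by (intro arccos_le_arccos)
qed

lemma class_margin_simplex: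
  assumes "2 \<le> k"
    and "\<And>i j. i \<in> {1..k} \<Longrightarrow> j \<in> {1..k} \<Longrightarrow> i \<noteq> j \<Longrightarrow> w i \<bullet> w j = x"
  shows "class_margin k w = arccos x"
proof -
  define P where "P = {w i \<bullet> w j | i j. i \<in> {1..k} \<and> j \<in> {1..k} \<and> i \<noteq> j}"
  have "1 \<in> {1..k}" "2 \<in> {1..k}" "(1::nat) \<noteq> 2" "x = w 1 \<bullet> w 2"
    using assms by simp_all
  then have "x \<in> P"
    unfolding P_def by blast
  moreover have "P \<subseteq> {x}"
    unfolding P_def using assms(2) by blast
  ultimately have "P = {x}"
    by blast
  then show ?thesis
    unfolding class_margin_def P_def by simp
qed

lemma min_sample_margin_le_neg_sm_risk:
  assumes "0 < N"
  shows "min_sample_margin k N w z y \<le> - sm_risk k N w z y"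
proof -
  have "real N * min_sample_margin k N w z y \<le> (\<Sum>i<N. sample_margin k w (y i) (z i))"
    using sum_bounded_below[of "{..<N}" "min_sample_margin k N w z y"]
    unfolding min_sample_margin_eq_Min_image by (auto intro: Min_le)
  then show ?thesis
    using assms unfolding sm_risk_eq_mean_sample_margin by (simp add: field_simps)
qed

lemma min_sample_margin_const:
  assumes "0 < N" and "\<And>i. i < N \<Longrightarrow> sample_margin k w (y i) (z i) = x"
  shows "min_sample_margin k N w z y = x"
proof -
  have "(\<lambda>i. sample_margin k w (y i) (z i)) ` {..<N} = (\<lambda>i. x) ` {..<N}"
    using assms(2) by simp
  also have "\<dots> = {x}"
    using assms(1) by auto
  finally show ?thesis
    unfolding min_sample_margin_eq_Min_image by simp
qed

definition simplex_etf :: "nat \<Rightarrow> (nat \<Rightarrow> real^'d) \<Rightarrow> bool" where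
  "simplex_etf k w \<longleftrightarrow>
    (\<forall>i\<in>{1..k}. \<forall>j\<in>{1..k}. i \<noteq> j \<longrightarrow> w i \<bullet> w j = - 1 / (real k - 1))"

locale balanced_spherical_data =
  fixes k N n :: nat and w z :: "nat \<Rightarrow> real^'d" and y :: "nat \<Rightarrow> nat"
  assumes two_le_k: "2 \<le> k"
    and label_range: "\<And>i. i < N \<Longrightarrow> y i \<in> {1..k}"
    and class_card: "\<And>c. c \<in> {1..k} \<Longrightarrow> card {i. i < N \<and> y i = c} = n"
    and n_pos: "0 < n"
    and unit_w: "\<And>j. j \<in> {1..k} \<Longrightarrow> norm (w j) = 1"
    and unit_z: "\<And>i. i < N \<Longrightarrow> norm (z i) = 1"
begin

abbreviation prototype_sum :: "real^'d" where
  "prototype_sum \<equiv> \<Sum>j\<in>{1..k}. w j"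

abbreviation optimal_risk :: real where
  "optimal_risk \<equiv> - (real k / (real k - 1))"

lemma sum_over_samples:
  fixes f :: "nat \<Rightarrow> 'a::comm_semiring_1"
  shows "(\<Sum>i<N. f (y i)) = of_nat n * (\<Sum>c\<in>{1..k}. f c)"
  by (rule sum_balanced_labels[OF finite_atLeastAtMost label_range class_card])

lemma N_eq: "N = n * k"
  using sum_over_samples[of "\<lambda>_. 1 :: nat"] by simp

lemma N_pos: "0 < N"
  using N_eq n_pos two_le_k by simp

lemma sum_sample_margin_le:
  "2 * real k * (real k - 1) * (\<Sum>i<N. sample_margin k w (y i) (z i))
    \<le> real N * (2 * (real k)\<^sup>2 - prototype_sum \<bullet> prototype_sum)"
proof -
  define S where "S = prototype_sum"
  let ?f = "\<lambda>c. 2 * (real k)\<^sup>2 - 2 * real k * (S \<bullet> w c) + S \<bullet> S"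
  have "2 * real k * (real k - 1) * (\<Sum>i<N. sample_margin k w (y i) (z i))
      = (\<Sum>i<N. 2 * real k * (real k - 1) * sample_margin k w (y i) (z i))"
    by (simp add: sum_distrib_left)
  also have "\<dots> \<le> (\<Sum>i<N. ?f (y i))"
  proof (rule sum_mono)
    fix i assume "i \<in> {..<N}"
    then show "2 * real k * (real k - 1) * sample_margin k w (y i) (z i) \<le> ?f (y i)"
      unfolding S_def using label_range unit_z unit_w[OF label_range]
      by (intro sample_margin_quadratic_bound) simp_all
  qed
  also have "\<dots> = real n * (\<Sum>c\<in>{1..k}. ?f c)"
    by (rule sum_over_samples)
  also have "(\<Sum>c\<in>{1..k}. ?f c) = real k * (2 * (real k)\<^sup>2 - S \<bullet> S)"
    unfolding S_def
    by (simp add: sum.distrib sum_subtractf inner_sum_right flip: sum_distrib_left)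
      (simp add: algebra_simps power2_eq_square)
  finally show ?thesis
    unfolding S_def N_eq by (simp add: mult.assoc)
qed

lemma sm_risk_lower_bound:
  "optimal_risk + prototype_sum \<bullet> prototype_sum / (2 * real k * (real k - 1))
    \<le> sm_risk k N w z y"
proof -
  define D where "D = 2 * real k * (real k - 1)"
  define P where "P = prototype_sum \<bullet> prototype_sum"
  have "0 < D"
    unfolding D_def using two_le_k by simp
  have "(\<Sum>i<N. sample_margin k w (y i) (z i)) / real N
      = D * (\<Sum>i<N. sample_margin k w (y i) (z i)) / (D * real N)"
    using \<open>0 < D\<close> by simp
  also have "\<dots> \<le> real N * (2 * (real k)\<^sup>2 - P) / (D * real N)"
    using sum_sample_margin_le N_pos \<open>0 < D\<close> unfolding D_def P_def
    by (intro divide_right_mono) simp_all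
  also have "\<dots> = 2 * (real k)\<^sup>2 / D - P / D"
    using N_pos by (simp add: diff_divide_distrib)
  also have "2 * (real k)\<^sup>2 / D = - optimal_risk"
    unfolding D_def using two_le_k by (simp add: power2_eq_square)
  finally show ?thesis
    unfolding sm_risk_eq_mean_sample_margin D_def P_def by linarith
qed

corollary optimal_risk_le: "optimal_risk \<le> sm_risk k N w z y"
proof -
  have "0 \<le> prototype_sum \<bullet> prototype_sum / (2 * real k * (real k - 1))"
    using two_le_k by simp
  then show ?thesis
    using sm_risk_lower_bound by linarith
qed

lemma prototype_sum_eq_0_if_optimal:
  assumes "sm_risk k N w z y = optimal_risk"
  shows "prototype_sum = 0"
proof -
  have "prototype_sum \<bullet> prototype_sum / (2 * real k * (real k - 1)) \<le> 0"
    using sm_risk_lower_bound assms by linarith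
  moreover have "0 < 2 * real k * (real k - 1)"
    using two_le_k by simp
  ultimately have "prototype_sum \<bullet> prototype_sum \<le> 0"
    by (simp add: divide_le_0_iff)
  then show ?thesis
    by (metis inner_eq_zero_iff inner_ge_zero order_antisym)
qed

lemma inner_prototype_feature_le_1: "i < N \<Longrightarrow> w (y i) \<bullet> z i \<le> 1"
  using norm_cauchy_schwarz[of "w (y i)" "z i"] unit_z unit_w[OF label_range] by simp

lemma sample_margin_eq_if_optimal:
  assumes "sm_risk k N w z y = optimal_risk" and "i < N"
  shows "sample_margin k w (y i) (z i) = - optimal_risk"
proof -
  have le: "sample_margin k w (y l) (z l) \<le> - optimal_risk" if "l < N" for l
  proof -
    have "(real k - 1) * sample_margin k w (y l) (z l) \<le> real k * (w (y l) \<bullet> z l)"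
      using sample_margin_le_inner[OF label_range[OF that], where w = w and v = "z l"]
        prototype_sum_eq_0_if_optimal[OF assms(1)] by simp
    also have "\<dots> \<le> real k"
      using mult_left_mono[OF inner_prototype_feature_le_1[OF that], of "real k"] by simp
    finally show ?thesis
      using two_le_k by (simp add: field_simps)
  qed
  have "(\<Sum>l<N. sample_margin k w (y l) (z l)) = (\<Sum>l<N. - optimal_risk)"
    using assms(1) N_pos unfolding sm_risk_eq_mean_sample_margin by (simp add: field_simps)
  then show ?thesis
    by (rule sum_mono_inv) (use le assms(2) in auto)
qed

lemma feature_eq_prototype_if_optimal:
  assumes "sm_risk k N w z y = optimal_risk" and "i < N"
  shows "z i = w (y i)"
proof -
  have "(real k - 1) * (- optimal_risk) \<le> real k * (w (y i) \<bullet> z i)"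
    using sample_margin_le_inner[OF label_range[OF assms(2)], where w = w and v = "z i"]
      sample_margin_eq_if_optimal[OF assms] prototype_sum_eq_0_if_optimal[OF assms(1)] by simp
  then have "1 \<le> w (y i) \<bullet> z i"
    using two_le_k by simp
  then have "w (y i) \<bullet> z i = 1"
    using inner_prototype_feature_le_1[OF assms(2)] by simp
  then show ?thesis
    using unit_vector_eq_if_inner_eq_1 unit_z[OF assms(2)] unit_w[OF label_range[OF assms(2)]]
    by (metis inner_commute)
qed

lemma simplex_etf_if_optimal:
  assumes "sm_risk k N w z y = optimal_risk"
  shows "simplex_etf k w"
  unfolding simplex_etf_def
proof (intro ballI impI)
  fix i j assume ij: "i \<in> {1..k}" "j \<in> {1..k}" "i \<noteq> j"
  have "card {s. s < N \<and> y s = j} \<noteq> 0"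
    using class_card[OF ij(2)] n_pos by simp
  then obtain s where s: "s < N" "y s = j"
    by (metis (mono_tags, lifting) Collect_empty_eq card.empty)
  have "1 - max_other k w j (w j) = - optimal_risk"
    using sample_margin_eq_if_optimal[OF assms s(1)] feature_eq_prototype_if_optimal[OF assms s(1)]
      unit_w[OF ij(2)] s(2) unfolding sample_margin_def by (simp add: norm_eq_1)
  then have M: "max_other k w j (w j) = - 1 / (real k - 1)"
    using two_le_k by (simp add: field_simps)
  have "(\<Sum>l\<in>{1..k} - {j}. w l \<bullet> w j) = - 1"
    using sum_others_inner[OF ij(2), of w "w j"] prototype_sum_eq_0_if_optimal[OF assms]
      unit_w[OF ij(2)] by (simp add: norm_eq_1)
  also have "\<dots> = (real k - 1) * max_other k w j (w j)"
    using M two_le_k by simp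
  finally have "w i \<bullet> w j = max_other k w j (w j)"
    by (rule inner_eq_max_other_if_sum_others_eq[OF ij(2) _ ij(1,3)])
  then show "w i \<bullet> w j = - 1 / (real k - 1)"
    using M by simp
qed

lemma sample_margin_if_simplex_etf:
  assumes "simplex_etf k w" and "\<And>i. i < N \<Longrightarrow> z i = w (y i)" and "i < N"
  shows "sample_margin k w (y i) (z i) = - optimal_risk"
proof -
  have "y i \<in> {1..k}"
    using label_range[OF assms(3)] .
  then have "sample_margin k w (y i) (w (y i)) = real k / (real k - 1)"
    using two_le_k unit_w assms(1) unfolding simplex_etf_def by (intro sample_margin_simplex) auto
  then show ?thesis
    using assms(2,3) by simp
qed

lemma sm_risk_if_simplex_etf:
  assumes "simplex_etf k w" and "\<And>i. i < N \<Longrightarrow> z i = w (y i)"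
  shows "sm_risk k N w z y = optimal_risk"
  using sample_margin_if_simplex_etf[OF assms] N_pos unfolding sm_risk_eq_mean_sample_margin by simp

end

theorem theorem4:
  fixes w z :: "nat \<Rightarrow> real^'d" and y :: "nat \<Rightarrow> nat" and k N :: nat
  assumes "CARD('d) \<ge> 2"
    and "2 \<le> k" and "k \<le> CARD('d) + 1"
    and "\<forall>i<N. y i \<in> {1..k}"
    and "N mod k = 0" and "N div k \<ge> 1"
    and "\<forall>c\<in>{1..k}. card {i. i < N \<and> y i = c} = N div k"
    and "\<forall>j\<in>{1..k}. norm (w j) = 1"
    and "\<forall>i<N. norm (z i) = 1"
  shows "sm_risk k N w z y \<ge> - (real k / (real k - 1))
    \<and> (sm_risk k N w z y = - (real k / (real k - 1)) \<longleftrightarrow>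
         ((\<forall>i\<in>{1..k}. \<forall>j\<in>{1..k}. i \<noteq> j \<longrightarrow> w i \<bullet> w j = - 1 / (real k - 1))
          \<and> (\<forall>i<N. z i = w (y i))))
    \<and> (sm_risk k N w z y = - (real k / (real k - 1)) \<longrightarrow>
         class_margin k w = arccos (- 1 / (real k - 1))
         \<and> min_sample_margin k N w z y = real k / (real k - 1))
    \<and> class_margin k w \<le> arccos (- 1 / (real k - 1))
    \<and> min_sample_margin k N w z y \<le> real k / (real k - 1)"
proof -
  (* N mod k = 0 follows from class balance. *)
  interpret balanced_spherical_data k N "N div k" w z y
    using assms(2,4,6-9) by unfold_locales auto
  have optimal_iff: "sm_risk k N w z y = optimal_risk
      \<longleftrightarrow> simplex_etf k w \<and> (\<forall>i<N. z i = w (y i))"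
    using simplex_etf_if_optimal feature_eq_prototype_if_optimal sm_risk_if_simplex_etf by blast
  have margins_at_optimum: "class_margin k w = arccos (- 1 / (real k - 1))
      \<and> min_sample_margin k N w z y = real k / (real k - 1)"
    if "sm_risk k N w z y = optimal_risk"
  proof
    have etf: "simplex_etf k w" and features: "\<And>i. i < N \<Longrightarrow> z i = w (y i)"
      using that optimal_iff by blast+
    show "class_margin k w = arccos (- 1 / (real k - 1))"
      using etf unfolding simplex_etf_def by (intro class_margin_simplex[OF two_le_k]) blast
    show "min_sample_margin k N w z y = real k / (real k - 1)"
      using sample_margin_if_simplex_etf[OF etf features] by (intro min_sample_margin_const[OF N_pos]) simp
  qed
  have "min_sample_margin k N w z y \<le> real k / (real k - 1)"
    using min_sample_margin_le_neg_sm_risk[OF N_pos, of k w z y] optimal_risk_le by linarith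
  with optimal_risk_le optimal_iff margins_at_optimum class_margin_le_simplex[OF two_le_k unit_w]
  show ?thesis
    unfolding simplex_etf_def by (intro conjI impI) auto
qed

end
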